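(* Let $\mathcal{V}$ be a finite set of Boolean variables, let $B^{inv}(\mathcal{V}\cup\mathbf{X}\mathcal{V})$ be a pure Boolean expression over the atoms $p$ and $\mathbf{X}p$ ($p\in\mathcal{V}$), and let $B^{fair}(\mathcal{V})$ be a pure Boolean expression over $\mathcal{V}$. For $\phi^c=\mathbf{G}\,B^{inv}(\mathcal{V}\cup\mathbf{X}\mathcal{V})\wedge\mathbf{F}\mathbf{G}\,\neg B^{fair}(\mathcal{V})$ we have $\dim(L(\phi^c))=\dim\big(L(\mathbf{G}(B^{inv}\wedge\neg B^{fair}))\big)$.
   Context: Formulae are interpreted over $\omega$-words $w=w_1w_2\dots$ over $\Sigma=2^{\mathcal{V}}$; $L(\phi)$ is the set of $\omega$-words satisfying $\phi$. $w\models p$ iff $p\in w_1$, $w\models\mathbf{X}p$ iff $p\in w_2$; $w\models\mathbf{G}\psi$ iff every suffix $w^j=w_jw_{j+1}\dots$ satisfies $\psi$, and $w\models\mathbf{F}\psi$ iff some suffix $w^j$ satisfies $\psi$. Let $r=|\Sigma|$. For $L\subseteq\Sigma^\omega$, the $\alpha$-dimensional Hausdorff outer measure is $m_\alpha(L)=\lim_{n\to\infty}\inf_{V\in\mathcal{L}_n}\sum_{v\in V}r^{-\alpha|v|}$, where $\mathcal{L}_n$ is the collection of sets $V\subseteq\Sigma^*$ of words of length at least $n$ such that every word of $L$ has a prefix in $V$; the Hausdorff dimension $\dim(L)$ is the unique $\bar\alpha$ with $m_\alpha(L)=\infty$ for $\alpha<\bar\alpha$ and $m_\alpha(L)=0$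 for $\alpha>\bar\alpha$. *)

theory Defs
  imports "HOL-Analysis.Analysis"
begin

text \<open>Variables: a finite type 'v (the finite set V). Alphabet Sigma = 2^V = 'v set.
  omega-words are functions nat => 'v set (index 0 = first letter).\<close>

type_synonym 'v oword = "nat \<Rightarrow> 'v set"

datatype 'a bexp = BTrue | BFalse | BAtom 'a | BNot "'a bexp"
  | BAnd "'a bexp" "'a bexp" | BOr "'a bexp" "'a bexp"

datatype 'v xatom = Cur 'v | Nxt 'v

datatype 'v ltl = LProp 'v | LTrue | LFalse | LNot "'v ltl" | LAnd "'v ltl" "'v ltl"
  | LOr "'v ltl" "'v ltl" | LX "'v ltl" | LG "'v ltl" | LF "'v ltl"

definition suffix_w :: "'v oword \<Rightarrow> nat \<Rightarrow> 'v oword" where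
  "suffix_w w j = (\<lambda>i. w (i + j))"

fun sat :: "'v oword \<Rightarrow> 'v ltl \<Rightarrow> bool" where
  "sat w (LProp p) = (p \<in> w 0)"
| "sat w LTrue = True"
| "sat w LFalse = False"
| "sat w (LNot \<phi>) = (\<not> sat w \<phi>)"
| "sat w (LAnd \<phi> \<psi>) = (sat w \<phi> \<and> sat w \<psi>)"
| "sat w (LOr \<phi> \<psi>) = (sat w \<phi> \<or> sat w \<psi>)"
| "sat w (LX \<phi>) = sat (suffix_w w 1) \<phi>"
| "sat w (LG \<phi>) = (\<forall>j. sat (suffix_w w j) \<phi>)"
| "sat w (LF \<phi>) = (\<exists>j. sat (suffix_w w j) \<phi>)"

definition lang :: "'v ltl \<Rightarrow> 'v oword set" where
  "lang \<phi> = {w. sat w \<phi>}"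

fun bexp_to_ltl :: "('a \<Rightarrow> 'v ltl) \<Rightarrow> 'a bexp \<Rightarrow> 'v ltl" where
  "bexp_to_ltl f BTrue = LTrue"
| "bexp_to_ltl f BFalse = LFalse"
| "bexp_to_ltl f (BAtom a) = f a"
| "bexp_to_ltl f (BNot b) = LNot (bexp_to_ltl f b)"
| "bexp_to_ltl f (BAnd b c) = LAnd (bexp_to_ltl f b) (bexp_to_ltl f c)"
| "bexp_to_ltl f (BOr b c) = LOr (bexp_to_ltl f b) (bexp_to_ltl f c)"

fun xatom_ltl :: "'v xatom \<Rightarrow> 'v ltl" where
  "xatom_ltl (Cur p) = LProp p"
| "xatom_ltl (Nxt p) = LX (LProp p)"

definition inv_ltl :: "'v xatom bexp \<Rightarrow> 'v ltl" where
  "inv_ltl b = bexp_to_ltl xatom_ltl b"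

definition fair_ltl :: "'v bexp \<Rightarrow> 'v ltl" where
  "fair_ltl b = bexp_to_ltl LProp b"

definition alph_size :: "'v::finite itself \<Rightarrow> real" where
  "alph_size _ = 2 ^ CARD('v)"

definition is_prefix :: "'v set list \<Rightarrow> 'v oword \<Rightarrow> bool" where
  "is_prefix u w \<longleftrightarrow> (\<forall>i < length u. u ! i = w i)"

definition covers :: "'v oword set \<Rightarrow> nat \<Rightarrow> 'v set list set set" where
  "covers L n = {V. (\<forall>v\<in>V. length v \<ge> n) \<and> (\<forall>w\<in>L. \<exists>v\<in>V. is_prefix v w)}"

text \<open>Sum of nonnegative terms over an arbitrary set: supremum of finite partial sums.\<close>
definition cover_weight :: "real \<Rightarrow> ('v::finite) set list set \<Rightarrow> ennreal" where
  "cover_weight \<alpha> V = (SUP F\<in>{F. finite F \<and> F \<subseteq> V}.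
      \<Sum>v\<in>F. ennreal (alph_size TYPE('v) powr (- \<alpha> * real (length v))))"

definition hmeasure :: "real \<Rightarrow> ('v::finite) oword set \<Rightarrow> ennreal" where
  "hmeasure \<alpha> L = lim (\<lambda>n. INF V\<in>covers L n. cover_weight \<alpha> V)"

definition hdim :: "('v::finite) oword set \<Rightarrow> real" where
  "hdim L = (THE d. (\<forall>\<alpha><d. hmeasure \<alpha> L = \<infinity>) \<and> (\<forall>\<alpha>>d. hmeasure \<alpha> L = 0))"

end

theory Submission
  imports Defs
begin

text \<open>A word satisfying \<open>G \<phi> \<and> F G \<not>\<psi>\<close> has a suffix satisfying \<open>G (\<phi> \<and> \<not>\<psi>)\<close>, so the
  first language lies between the second one and the countable union of the preimages of the
  second one under the shifts. Prepending all \<open>r\<^sup>k\<close> words of length \<open>k\<close> to a cover multiplies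
  its \<open>\<alpha>\<close>-weight by at most the constant \<open>r\<^sup>k \<cdot> r powr (-\<alpha> k)\<close>, so shift preimages of null sets
  are null; countable unions of null sets are null. Hence both languages have the same null sets
  for every \<open>\<alpha>\<close>, and since the Hausdorff measure drops from \<open>\<infinity>\<close> to \<open>0\<close> at the dimension, they have
  the same dimension.\<close>

abbreviation word_weight :: "real \<Rightarrow> ('v::finite) set list \<Rightarrow> ennreal" where
  "word_weight \<alpha> v \<equiv> ennreal (alph_size TYPE('v) powr (- \<alpha> * real (length v)))"

lemma alph_size_ge_2: "alph_size TYPE('v::finite) \<ge> 2"
proof -
  have "(2::real) ^ 1 \<le> 2 ^ CARD('v)"
    by (intro power_increasing) (auto simp: Suc_leI)
  then show ?thesis by (simp add: alph_size_def)
qed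

lemma word_weight_append:
  "word_weight \<alpha> (u @ v :: ('v::finite) set list) = word_weight \<alpha> u * word_weight \<alpha> v"
  by (simp add: powr_add[symmetric] algebra_simps ennreal_mult[symmetric])

lemma cover_weight_leI:
  assumes "\<And>F. finite F \<Longrightarrow> F \<subseteq> V \<Longrightarrow> (\<Sum>v\<in>F. word_weight \<alpha> v) \<le> c"
  shows "cover_weight \<alpha> (V :: ('v::finite) set list set) \<le> c"
  unfolding cover_weight_def using assms by (intro SUP_least) auto

lemma sum_le_cover_weight:
  assumes "finite F" "F \<subseteq> V"
  shows "(\<Sum>v\<in>F. word_weight \<alpha> v) \<le> cover_weight \<alpha> (V :: ('v::finite) set list set)"
  unfolding cover_weight_def using assms by (intro SUP_upper) auto

lemma cover_weight_empty: "cover_weight \<alpha> ({} :: ('v::finite) set list set) = 0"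
  by (intro antisym cover_weight_leI) auto

lemma cover_weight_Un_le:
  "cover_weight \<alpha> (A \<union> B :: ('v::finite) set list set) \<le> cover_weight \<alpha> A + cover_weight \<alpha> B"
proof (rule cover_weight_leI)
  fix F assume F: "finite F" "F \<subseteq> A \<union> B"
  have "(\<Sum>v\<in>F. word_weight \<alpha> v) = (\<Sum>v\<in>F \<inter> A. word_weight \<alpha> v) + (\<Sum>v\<in>F - A. word_weight \<alpha> v)"
    using F(1) by (rule sum.Int_Diff)
  also have "\<dots> \<le> cover_weight \<alpha> A + cover_weight \<alpha> B"
    using F by (intro add_mono sum_le_cover_weight) auto
  finally show "(\<Sum>v\<in>F. word_weight \<alpha> v) \<le> cover_weight \<alpha> A + cover_weight \<alpha> B" .
qed

lemma cover_weight_UN_finite_le: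
  fixes V :: "'i \<Rightarrow> ('v::finite) set list set"
  assumes "finite I"
  shows "cover_weight \<alpha> (\<Union>i\<in>I. V i) \<le> (\<Sum>i\<in>I. cover_weight \<alpha> (V i))"
  using assms
proof (induction I rule: finite_induct)
  case empty
  then show ?case by (simp add: cover_weight_empty)
next
  case (insert i I)
  have "cover_weight \<alpha> (\<Union>j\<in>insert i I. V j) \<le> cover_weight \<alpha> (V i) + cover_weight \<alpha> (\<Union>j\<in>I. V j)"
    using cover_weight_Un_le by simp
  also have "\<dots> \<le> cover_weight \<alpha> (V i) + (\<Sum>j\<in>I. cover_weight \<alpha> (V j))"
    using insert.IH by (rule add_left_mono)
  finally show ?case using insert.hyps by simp
qed

lemma cover_weight_UN_le:
  fixes V :: "nat \<Rightarrow> ('v::finite) set list set"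
  shows "cover_weight \<alpha> (\<Union>k. V k) \<le> (\<Sum>k. cover_weight \<alpha> (V k))"
proof (rule cover_weight_leI)
  fix F assume F: "finite F" "F \<subseteq> (\<Union>k. V k)"
  then obtain f where f: "\<And>x. x \<in> F \<Longrightarrow> x \<in> V (f x)" by (metis UN_iff subsetD)
  obtain K where "f ` F \<subseteq> {..<K}" using finite_nat_bounded F(1) by blast
  with f have "F \<subseteq> (\<Union>k<K. V k)" by blast
  with F(1) have "(\<Sum>v\<in>F. word_weight \<alpha> v) \<le> cover_weight \<alpha> (\<Union>k<K. V k)"
    by (rule sum_le_cover_weight)
  also have "\<dots> \<le> (\<Sum>k<K. cover_weight \<alpha> (V k))"
    by (rule cover_weight_UN_finite_le) simp
  also have "\<dots> \<le> (\<Sum>k. cover_weight \<alpha> (V k))"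
    by (rule sum_le_suminf) auto
  finally show "(\<Sum>v\<in>F. word_weight \<alpha> v) \<le> (\<Sum>k. cover_weight \<alpha> (V k))" .
qed

lemma cover_weight_prepend_le:
  "cover_weight \<alpha> ((@) u ` V :: ('v::finite) set list set) \<le> word_weight \<alpha> u * cover_weight \<alpha> V"
proof (rule cover_weight_leI)
  fix F assume "finite F" "F \<subseteq> (@) u ` V"
  then obtain G where G: "G \<subseteq> V" "finite G" "F = (@) u ` G"
    by (metis finite_subset_image)
  have "inj_on ((@) u) G"
    by (rule inj_onI) simp
  then have "(\<Sum>v\<in>F. word_weight \<alpha> v) = (\<Sum>v\<in>G. word_weight \<alpha> (u @ v))"
    using G(3) by (rule sum.reindex_cong) simp
  also have "\<dots> = word_weight \<alpha> u * (\<Sum>v\<in>G. word_weight \<alpha> v)"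
    by (simp only: word_weight_append sum_distrib_left)
  also have "\<dots> \<le> word_weight \<alpha> u * cover_weight \<alpha> V"
    using G by (intro mult_left_mono sum_le_cover_weight) auto
  finally show "(\<Sum>v\<in>F. word_weight \<alpha> v) \<le> word_weight \<alpha> u * cover_weight \<alpha> V" .
qed

lemma cover_weight_le_scaled:
  assumes "\<forall>v\<in>V. length v \<ge> N" "\<alpha> \<le> \<beta>"
  shows "cover_weight \<beta> (V :: ('v::finite) set list set)
     \<le> ennreal (alph_size TYPE('v) powr (- (\<beta> - \<alpha>) * real N)) * cover_weight \<alpha> V"
proof (rule cover_weight_leI)
  let ?r = "alph_size TYPE('v)" and ?c = "alph_size TYPE('v) powr (- (\<beta> - \<alpha>) * real N)"
  fix F assume F: "finite F" "F \<subseteq> V"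
  have "word_weight \<beta> v \<le> ennreal ?c * word_weight \<alpha> v" if "v \<in> F" for v
  proof -
    have "?r powr (- \<beta> * real (length v))
        = ?r powr (- (\<beta> - \<alpha>) * real (length v)) * ?r powr (- \<alpha> * real (length v))"
      by (simp add: powr_add[symmetric] algebra_simps)
    also have "\<dots> \<le> ?c * ?r powr (- \<alpha> * real (length v))"
      using alph_size_ge_2[where 'v='v] assms that F(2)
      by (intro mult_right_mono powr_mono mult_left_mono_neg) auto
    finally show ?thesis by (simp add: ennreal_mult[symmetric])
  qed
  then have "(\<Sum>v\<in>F. word_weight \<beta> v) \<le> (\<Sum>v\<in>F. ennreal ?c * word_weight \<alpha> v)"
    by (rule sum_mono)
  also have "\<dots> = ennreal ?c * (\<Sum>v\<in>F. word_weight \<alpha> v)"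
    by (rule sum_distrib_left[symmetric])
  also have "\<dots> \<le> ennreal ?c * cover_weight \<alpha> V"
    using F by (intro mult_left_mono sum_le_cover_weight) auto
  finally show "(\<Sum>v\<in>F. word_weight \<beta> v) \<le> ennreal ?c * cover_weight \<alpha> V" .
qed

definition hmeasure_approx :: "real \<Rightarrow> ('v::finite) oword set \<Rightarrow> nat \<Rightarrow> ennreal" where
  "hmeasure_approx \<alpha> L n = (INF V\<in>covers L n. cover_weight \<alpha> V)"

lemma incseq_hmeasure_approx: "incseq (hmeasure_approx \<alpha> L)"
  unfolding incseq_def hmeasure_approx_def
  by (intro allI impI INF_superset_mono) (auto simp: covers_def)

lemma hmeasure_eq_SUP: "hmeasure \<alpha> L = (SUP n. hmeasure_approx \<alpha> L n)"
proof -
  have "hmeasure_approx \<alpha> L = (\<lambda>n. INF V\<in>covers L n. cover_weight \<alpha> V)"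
    by (simp add: hmeasure_approx_def fun_eq_iff)
  with incseq_hmeasure_approx show ?thesis
    unfolding hmeasure_def by (metis LIMSEQ_SUP limI)
qed

lemma hmeasure_approx_le_hmeasure: "hmeasure_approx \<alpha> L n \<le> hmeasure \<alpha> L"
  unfolding hmeasure_eq_SUP by (rule SUP_upper) simp

lemma hmeasure_mono: "L \<subseteq> L' \<Longrightarrow> hmeasure \<alpha> L \<le> hmeasure \<alpha> L'"
  unfolding hmeasure_eq_SUP hmeasure_approx_def
  by (intro SUP_mono' INF_superset_mono) (auto simp: covers_def)

lemma hmeasure_eq_0_iff:
  "hmeasure \<alpha> L = 0 \<longleftrightarrow> (\<forall>n. \<forall>e>0. \<exists>V\<in>covers L n. cover_weight \<alpha> V \<le> ennreal e)"
proof
  assume L: "hmeasure \<alpha> L = 0"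
  show "\<forall>n. \<forall>e>0. \<exists>V\<in>covers L n. cover_weight \<alpha> V \<le> ennreal e"
  proof (intro allI impI)
    fix n and e :: real assume "e > 0"
    with L hmeasure_approx_le_hmeasure[of \<alpha> L n] have "hmeasure_approx \<alpha> L n < ennreal e"
      by simp
    then show "\<exists>V\<in>covers L n. cover_weight \<alpha> V \<le> ennreal e"
      unfolding hmeasure_approx_def by (meson INF_less_iff less_imp_le)
  qed
next
  assume L: "\<forall>n. \<forall>e>0. \<exists>V\<in>covers L n. cover_weight \<alpha> V \<le> ennreal e"
  have "hmeasure_approx \<alpha> L n \<le> 0" for n
  proof (rule ennreal_le_epsilon)
    fix e :: real assume "0 < e"
    then obtain V where "V \<in> covers L n" "cover_weight \<alpha> V \<le> ennreal e" using L by blast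
    then show "hmeasure_approx \<alpha> L n \<le> 0 + ennreal e"
      unfolding hmeasure_approx_def by (simp add: INF_lower2)
  qed
  then show "hmeasure \<alpha> L = 0" unfolding hmeasure_eq_SUP by (simp add: SUP_least antisym)
qed

lemma hmeasure_eq_0_above:
  assumes fin: "hmeasure \<alpha> (L :: ('v::finite) oword set) < \<infinity>" and "\<alpha> < \<beta>"
  shows "hmeasure \<beta> L = 0"
proof -
  let ?r = "alph_size TYPE('v)"
  define q where "q = ?r powr - (\<beta> - \<alpha>)"
  obtain m0 where "hmeasure \<alpha> L = ennreal m0" "m0 \<ge> 0"
    using fin by (auto simp: less_top_ennreal)
  then obtain m where m: "hmeasure \<alpha> L < ennreal m"
    by (metis ennreal_lessI less_add_one add_nonneg_pos zero_less_one)
  have q: "0 \<le> q" "q < 1"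
    unfolding q_def using alph_size_ge_2[where 'v='v] \<open>\<alpha> < \<beta>\<close> by (auto simp: powr_less_one)
  have approx_le: "hmeasure_approx \<beta> L N \<le> ennreal (q ^ N * m)" for N
  proof -
    have "hmeasure_approx \<alpha> L N < ennreal m"
      using hmeasure_approx_le_hmeasure m by (rule le_less_trans)
    then obtain V where V: "V \<in> covers L N" "cover_weight \<alpha> V < ennreal m"
      unfolding hmeasure_approx_def by (auto simp: INF_less_iff)
    have "?r powr (- (\<beta> - \<alpha>) * real N) = q ^ N"
      unfolding q_def using alph_size_ge_2[where 'v='v] by (simp add: powr_powr[symmetric] powr_realpow)
    moreover have "hmeasure_approx \<beta> L N \<le> cover_weight \<beta> V"
      using V(1) unfolding hmeasure_approx_def by (rule INF_lower)
    ultimately have "hmeasure_approx \<beta> L N \<le> ennreal (q ^ N) * cover_weight \<alpha> V"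
      using V(1) \<open>\<alpha> < \<beta>\<close> cover_weight_le_scaled[of V N \<alpha> \<beta>] by (auto simp: covers_def)
    also have "\<dots> \<le> ennreal (q ^ N) * ennreal m"
      using V(2) by (intro mult_left_mono) auto
    finally show ?thesis using q by (simp add: ennreal_mult')
  qed
  have "(\<lambda>N. ennreal (q ^ N * m)) \<longlonglongrightarrow> ennreal (0 * m)"
    using q by (intro tendsto_ennrealI tendsto_mult LIMSEQ_power_zero tendsto_const) auto
  moreover have "hmeasure_approx \<beta> L n \<le> ennreal (q ^ N * m)" if "N \<ge> n" for n N
    using incseq_hmeasure_approx that approx_le by (metis incseq_def order.trans)
  ultimately have "hmeasure_approx \<beta> L n \<le> 0" for n
    by (intro LIMSEQ_le_const) auto
  then show ?thesis unfolding hmeasure_eq_SUP by (simp add: SUP_least antisym)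
qed

lemma hmeasure_eq_top_below:
  assumes "hmeasure \<beta> L \<noteq> 0" "\<alpha> < \<beta>"
  shows "hmeasure \<alpha> L = \<infinity>"
proof (rule ccontr)
  assume "hmeasure \<alpha> L \<noteq> \<infinity>"
  with assms(2) have "hmeasure \<beta> L = 0"
    by (intro hmeasure_eq_0_above) (simp_all add: less_top[symmetric])
  with assms(1) show False ..
qed

lemma hdim_eqI_null_sets:
  fixes A B :: "('v::finite) oword set"
  assumes "\<And>\<alpha>. hmeasure \<alpha> A = 0 \<longleftrightarrow> hmeasure \<alpha> B = 0"
  shows "hdim A = hdim B"
proof -
  have transfer: "(\<forall>\<alpha><d. hmeasure \<alpha> B' = \<infinity>) \<and> (\<forall>\<alpha>>d. hmeasure \<alpha> B' = 0)"
    if null: "\<And>\<alpha>. hmeasure \<alpha> A' = 0 \<longleftrightarrow> hmeasure \<alpha> B' = 0"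
      and A': "(\<forall>\<alpha><d. hmeasure \<alpha> A' = \<infinity>) \<and> (\<forall>\<alpha>>d. hmeasure \<alpha> A' = 0)"
    for A' B' :: "'v oword set" and d
  proof (intro conjI allI impI)
    fix \<alpha> assume "\<alpha> < d"
    then have "hmeasure ((\<alpha> + d) / 2) A' = \<infinity>"
      using A' by auto
    then have "hmeasure ((\<alpha> + d) / 2) B' \<noteq> 0"
      using null[of "(\<alpha> + d) / 2"] by simp
    then show "hmeasure \<alpha> B' = \<infinity>"
      by (rule hmeasure_eq_top_below) (use \<open>\<alpha> < d\<close> in simp)
  next
    fix \<alpha> assume "\<alpha> > d"
    then show "hmeasure \<alpha> B' = 0" using A' null by auto
  qed
  have "((\<forall>\<alpha><d. hmeasure \<alpha> A = \<infinity>) \<and> (\<forall>\<alpha>>d. hmeasure \<alpha> A = 0))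
    \<longleftrightarrow> ((\<forall>\<alpha><d. hmeasure \<alpha> B = \<infinity>) \<and> (\<forall>\<alpha>>d. hmeasure \<alpha> B = 0))" for d
    using transfer[of A B d, OF assms] transfer[of B A d, OF assms[symmetric]] by blast
  then show ?thesis unfolding hdim_def by simp
qed

lemma hmeasure_UN_eq_0:
  fixes A :: "nat \<Rightarrow> ('v::finite) oword set"
  assumes "\<And>k. hmeasure \<alpha> (A k) = 0"
  shows "hmeasure \<alpha> (\<Union>k. A k) = 0"
  unfolding hmeasure_eq_0_iff
proof (intro allI impI)
  fix n and e :: real assume "e > 0"
  define \<epsilon> where "\<epsilon> k = e * (1 / 2) ^ Suc k" for k
  have "\<exists>V\<in>covers (A k) n. cover_weight \<alpha> V \<le> ennreal (\<epsilon> k)" for k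
    using assms[of k] \<open>e > 0\<close> unfolding hmeasure_eq_0_iff \<epsilon>_def by simp
  then obtain V where V: "\<And>k. V k \<in> covers (A k) n" "\<And>k. cover_weight \<alpha> (V k) \<le> ennreal (\<epsilon> k)"
    by metis
  have "(\<Union>k. V k) \<in> covers (\<Union>k. A k) n"
    using V(1) by (fastforce simp: covers_def)
  moreover have "cover_weight \<alpha> (\<Union>k. V k) \<le> ennreal e"
  proof -
    have "cover_weight \<alpha> (\<Union>k. V k) \<le> (\<Sum>k. cover_weight \<alpha> (V k))"
      by (rule cover_weight_UN_le)
    also have "\<dots> \<le> (\<Sum>k. ennreal (\<epsilon> k))"
      by (intro suminf_le V(2)) auto
    also have "\<dots> = ennreal e"
      using \<open>e > 0\<close> sums_mult[OF power_half_series, of e] unfolding \<epsilon>_def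
      by (intro suminf_ennreal_eq) auto
    finally show ?thesis .
  qed
  ultimately show "\<exists>V\<in>covers (\<Union>k. A k) n. cover_weight \<alpha> V \<le> ennreal e" by blast
qed

lemma hmeasure_shift_preimage_eq_0:
  fixes L :: "('v::finite) oword set"
  assumes "hmeasure \<alpha> L = 0"
  shows "hmeasure \<alpha> {w. suffix_w w k \<in> L} = 0"
  unfolding hmeasure_eq_0_iff
proof (intro allI impI)
  fix n and e :: real assume "e > 0"
  define P where "P = {u :: 'v set list. length u = k}"
  define c where "c = alph_size TYPE('v) powr (- \<alpha> * real k)"
  define D where "D = real (card P) * c"
  have "finite P"
    unfolding P_def using finite_lists_length_eq[of "UNIV :: 'v set set" k] by simp
  have "c \<ge> 0" "D \<ge> 0"
    unfolding c_def D_def by auto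
  with \<open>e > 0\<close> have "e / (D + 1) > 0"
    by simp
  then obtain V where V: "V \<in> covers L n" "cover_weight \<alpha> V \<le> ennreal (e / (D + 1))"
    using assms unfolding hmeasure_eq_0_iff by blast
  define V' where "V' = (\<Union>u\<in>P. (@) u ` V)"
  have "V' \<in> covers {w. suffix_w w k \<in> L} n"
    unfolding covers_def
  proof (intro CollectI conjI ballI)
    fix x assume "x \<in> V'"
    then show "n \<le> length x" using V(1) unfolding V'_def covers_def by auto
  next
    fix w assume "w \<in> {w. suffix_w w k \<in> L}"
    then obtain v where v: "v \<in> V" "is_prefix v (suffix_w w k)"
      using V(1) unfolding covers_def by auto
    define u where "u = map w [0..<k]"
    have "u \<in> P"
      unfolding P_def u_def by simp
    with v(1) have "u @ v \<in> V'"
      unfolding V'_def by blast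
    moreover have "is_prefix (u @ v) w"
      using v(2) unfolding is_prefix_def suffix_w_def u_def by (auto simp: nth_append)
    ultimately show "\<exists>v\<in>V'. is_prefix v w" by blast
  qed
  moreover have "cover_weight \<alpha> V' \<le> ennreal e"
  proof -
    have "cover_weight \<alpha> V' \<le> (\<Sum>u\<in>P. cover_weight \<alpha> ((@) u ` V))"
      unfolding V'_def using \<open>finite P\<close> by (rule cover_weight_UN_finite_le)
    also have "\<dots> \<le> (\<Sum>u\<in>P. word_weight \<alpha> u * ennreal (e / (D + 1)))"
      using V(2) by (intro sum_mono order.trans[OF cover_weight_prepend_le] mult_left_mono) auto
    also have "\<dots> = (\<Sum>u\<in>P. ennreal (c * (e / (D + 1))))"
      using \<open>e / (D + 1) > 0\<close> by (intro sum.cong) (simp_all add: P_def c_def flip: ennreal_mult)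
    also have "\<dots> = ennreal (\<Sum>u\<in>P. c * (e / (D + 1)))"
      using \<open>c \<ge> 0\<close> \<open>e / (D + 1) > 0\<close> by (intro sum_ennreal mult_nonneg_nonneg) auto
    also have "\<dots> = ennreal (D * (e / (D + 1)))"
      unfolding D_def by (simp add: mult.assoc)
    also have "\<dots> \<le> ennreal e"
      using \<open>e > 0\<close> \<open>D \<ge> 0\<close> by (intro ennreal_leI) (simp add: field_simps)
    finally show ?thesis .
  qed
  ultimately show "\<exists>V\<in>covers {w. suffix_w w k \<in> L} n. cover_weight \<alpha> V \<le> ennreal e" by blast
qed

lemma suffix_w_suffix_w: "suffix_w (suffix_w w a) b = suffix_w w (b + a)"
  unfolding suffix_w_def by (simp add: add.assoc)

lemma lang_G_and_not_subset:
  "lang (LG (LAnd \<phi> (LNot \<psi>))) \<subseteq> lang (LAnd (LG \<phi>) (LF (LG (LNot \<psi>))))"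
  by (auto simp: lang_def suffix_w_suffix_w intro: exI[of _ 0])

lemma lang_G_FG_subset_UN_shift_preimage:
  "lang (LAnd (LG \<phi>) (LF (LG (LNot \<psi>))))
     \<subseteq> (\<Union>k. {w. suffix_w w k \<in> lang (LG (LAnd \<phi> (LNot \<psi>)))})"
  by (auto simp: lang_def suffix_w_suffix_w)

theorem theorem5:
  fixes Binv :: "('v::finite) xatom bexp" and Bfair :: "'v bexp"
  shows "hdim (lang (LAnd (LG (inv_ltl Binv)) (LF (LG (LNot (fair_ltl Bfair))))))
       = hdim (lang (LG (LAnd (inv_ltl Binv) (LNot (fair_ltl Bfair)))))"
proof (rule hdim_eqI_null_sets)
  let ?L1 = "lang (LAnd (LG (inv_ltl Binv)) (LF (LG (LNot (fair_ltl Bfair)))))"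
  let ?L2 = "lang (LG (LAnd (inv_ltl Binv) (LNot (fair_ltl Bfair))))"
  fix \<alpha>
  show "hmeasure \<alpha> ?L1 = 0 \<longleftrightarrow> hmeasure \<alpha> ?L2 = 0"
  proof
    assume "hmeasure \<alpha> ?L1 = 0"
    then show "hmeasure \<alpha> ?L2 = 0"
      using hmeasure_mono[OF lang_G_and_not_subset[of "inv_ltl Binv" "fair_ltl Bfair"], of \<alpha>] by simp
  next
    assume "hmeasure \<alpha> ?L2 = 0"
    then have "hmeasure \<alpha> (\<Union>k. {w. suffix_w w k \<in> ?L2}) = 0"
      by (intro hmeasure_UN_eq_0 hmeasure_shift_preimage_eq_0)
    then show "hmeasure \<alpha> ?L1 = 0"
      using hmeasure_mono[OF lang_G_FG_subset_UN_shift_preimage[of "inv_ltl Binv" "fair_ltl Bfair"], of \<alpha>] by simp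
  qed
qed

end
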